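(* Let $(\Gamma,S)$ be a marked group, let $X$ be a standard Borel space, and let $a:\Gamma\curvearrowright X$ be a free Borel action whose Borel asymptotic separation index is $1$. Suppose that no element of $S$ has odd order. Then $\chi_B'(G(a,S))\le |S|+1$.
   Context: A marked group $(\Gamma,S)$ is a group $\Gamma$ together with a finite symmetric generating set $S$ not containing the identity. For a free Borel action $a:\Gamma\curvearrowright X$, the Schreier graph $G(a,S)$ is the graph on $X$ in which $x\neq y$ are adjacent iff $\gamma\cdot_a x=y$ for some $\gamma\in S$. An edge coloring of a graph is a map from its edges to a set of colors giving distinct colors to edges sharing a vertex; $\chi_B'(G)$ is the least cardinality of a color set for which a Borel edge coloring of $G$ exists. For a graph $G$ and positive integer $N$, $G^{\le N}$ is the graph joining two vertices iff there is a $G$-path of length at most $N$ between them. For a locally finite Borel graph $G$ on $X$, the Borel asymptotic separation index $\mathrm{asi}_B(G)$ is the least $s\in\omega$ such that for every positive integer $N$ there is a partition of $X$ into Borel sets $U_0,\dots,U_s$ such that each induced graph $G^{\le N}\upharpoonright U_i$ has only finite connected components. The Borel asymptotic separation index of the action $a$ is $\mathrm{asi}_B(G(a,S))$ (this does not depend on the choice of finite generating set). *)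

theory Defs
  imports "HOL-Analysis.Analysis" "HOL-Algebra.Multiplicative_Group" "HOL-Algebra.Generated_Groups"
    "HOL-Library.Extended_Nat"
begin

definition marked_group :: "('g, 'b) monoid_scheme \<Rightarrow> 'g set \<Rightarrow> bool" where
  "marked_group \<Gamma> S \<longleftrightarrow> group \<Gamma> \<and> S \<subseteq> carrier \<Gamma> \<and> finite S \<and> \<one>\<^bsub>\<Gamma>\<^esub> \<notin> S
     \<and> (\<forall>s\<in>S. inv\<^bsub>\<Gamma>\<^esub> s \<in> S) \<and> generate \<Gamma> S = carrier \<Gamma>"

text \<open>A Borel action of \<Gamma> on the standard Borel space given by the Borel sets of the
  Polish space 'x (acting maps are Borel measurable).\<close>
definition borel_action :: "('g, 'b) monoid_scheme \<Rightarrow> ('g \<Rightarrow> 'x::topological_space \<Rightarrow> 'x) \<Rightarrow> bool" where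
  "borel_action \<Gamma> a \<longleftrightarrow>
     (\<forall>x. a \<one>\<^bsub>\<Gamma>\<^esub> x = x)
   \<and> (\<forall>g\<in>carrier \<Gamma>. \<forall>h\<in>carrier \<Gamma>. \<forall>x. a (g \<otimes>\<^bsub>\<Gamma>\<^esub> h) x = a g (a h x))
   \<and> (\<forall>g\<in>carrier \<Gamma>. a g \<in> borel_measurable borel)"

definition free_action :: "('g, 'b) monoid_scheme \<Rightarrow> ('g \<Rightarrow> 'x \<Rightarrow> 'x) \<Rightarrow> bool" where
  "free_action \<Gamma> a \<longleftrightarrow> (\<forall>g\<in>carrier \<Gamma>. \<forall>x. a g x = x \<longrightarrow> g = \<one>\<^bsub>\<Gamma>\<^esub>)"

definition schreier_graph :: "('g \<Rightarrow> 'x \<Rightarrow> 'x) \<Rightarrow> 'g set \<Rightarrow> 'x \<Rightarrow> 'x \<Rightarrow> bool" where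
  "schreier_graph a S x y \<longleftrightarrow> x \<noteq> y \<and> (\<exists>\<gamma>\<in>S. a \<gamma> x = y)"

definition graph_power_le :: "('x \<Rightarrow> 'x \<Rightarrow> bool) \<Rightarrow> nat \<Rightarrow> 'x \<Rightarrow> 'x \<Rightarrow> bool" where
  "graph_power_le G N x y \<longleftrightarrow> x \<noteq> y \<and> (\<exists>k\<le>N. (G ^^ k) x y)"

definition induced_graph :: "('x \<Rightarrow> 'x \<Rightarrow> bool) \<Rightarrow> 'x set \<Rightarrow> 'x \<Rightarrow> 'x \<Rightarrow> bool" where
  "induced_graph G U x y \<longleftrightarrow> x \<in> U \<and> y \<in> U \<and> G x y"

definition finite_components :: "('x \<Rightarrow> 'x \<Rightarrow> bool) \<Rightarrow> 'x set \<Rightarrow> bool" where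
  "finite_components G V \<longleftrightarrow> (\<forall>x\<in>V. finite {y. (G\<^sup>*\<^sup>*) x y})"

definition asi_witness :: "('x::topological_space \<Rightarrow> 'x \<Rightarrow> bool) \<Rightarrow> nat \<Rightarrow> bool" where
  "asi_witness G s \<longleftrightarrow> (\<forall>N::nat. N > 0 \<longrightarrow>
     (\<exists>U :: nat \<Rightarrow> 'x set.
        (\<forall>i\<le>s. U i \<in> sets borel)
      \<and> (\<forall>i\<le>s. \<forall>j\<le>s. i \<noteq> j \<longrightarrow> U i \<inter> U j = {})
      \<and> (\<Union>i\<le>s. U i) = UNIV
      \<and> (\<forall>i\<le>s. finite_components (induced_graph (graph_power_le G N) (U i)) (U i))))"

definition asi_B :: "('x::topological_space \<Rightarrow> 'x \<Rightarrow> bool) \<Rightarrow> enat" where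
  "asi_B G = (if \<exists>s. asi_witness G s then enat (LEAST s. asi_witness G s) else \<infinity>)"

definition borel_edge_coloring ::
  "('x::topological_space \<Rightarrow> 'x \<Rightarrow> bool) \<Rightarrow> 'c set \<Rightarrow> ('x \<Rightarrow> 'x \<Rightarrow> 'c) \<Rightarrow> bool" where
  "borel_edge_coloring G C c \<longleftrightarrow>
     (\<forall>x y. G x y \<longrightarrow> c x y \<in> C \<and> c x y = c y x)
   \<and> (\<forall>x y z. G x y \<longrightarrow> G x z \<longrightarrow> y \<noteq> z \<longrightarrow> c x y \<noteq> c x z)
   \<and> (\<forall>k\<in>C. {(x, y). G x y \<and> c x y = k} \<in> sets (borel \<Otimes>\<^sub>M borel))"

end

theory Submission
  imports Defs
begin

text \<open>
  Pair every generator with its inverse. The edges of an involution s form a matching and get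
  a colour of their own. For s \<noteq> s\<inverse>, the s-edges form the orbits of \<langle>s\<rangle>, which are
  cycles of even length or bi-infinite lines, and they are coloured with the two colours of s and
  s\<inverse> plus one spare colour |S| shared by all generators. A cycle is coloured by the parity of
  the distance to its least point for a Borel linear order (the lexicographic order coming from a
  separating sequence of Borel sets). A line is cut at some of its edges, which get the spare
  colour, and each segment in between is coloured by parity. The cuts come from asi = 1: with
  X = U0 \<union> U1 and both pieces having finite components in G^(\<le>N), a ray can neither stay in
  U1 nor stay close to U0, so it crosses every shell around U0 of radius below N/2.
  Cutting the lines of the i-th generator pair exactly where they cross from shell 2i+2 into
  shell 2i+1 makes spare edges of different generators disjoint.
\<close>

lemma funpow_measurable:
  assumes "f \<in> M \<rightarrow>\<^sub>M M"
  shows "f ^^ n \<in> M \<rightarrow>\<^sub>M M"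
  by (induction n) (auto intro: measurable_compose[OF _ assms])

lemma relpowp_sym:
  assumes "symp R" and "(R ^^ n) x y"
  shows "(R ^^ n) y x"
  using assms(2)
proof (induction n arbitrary: x y)
  case (Suc n)
  then obtain z where "(R ^^ n) x z" "R z y" by auto
  with Suc.IH \<open>symp R\<close> have "R y z" "(R ^^ n) z x" by (auto dest: sympD)
  then show ?case by (rule relpowp_Suc_I2)
qed simp

lemma first_exit:
  fixes P :: "nat \<Rightarrow> bool"
  assumes "i \<le> j" "P i" "\<not> P j"
  obtains m where "i \<le> m" "m < j" "P m" "\<not> P (Suc m)"
  using dec_induct[of i j P] assms by blast

lemma finite_range_if_chain_in_finite_components:
  assumes fc: "finite_components (induced_graph R V) V"
    and in_V: "\<And>k. f k \<in> V"
    and step: "\<And>k. f (Suc k) = f k \<or> R (f k) (f (Suc k))"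
  shows "finite (range f)"
proof -
  have "(induced_graph R V)\<^sup>*\<^sup>* (f 0) (f k)" for k
  proof (induction k)
    case (Suc k)
    moreover have "f (Suc k) = f k \<or> induced_graph R V (f k) (f (Suc k))"
      using step[of k] in_V unfolding induced_graph_def by blast
    ultimately show ?case by (metis rtranclp.rtrancl_into_rtrancl)
  qed simp
  then have "range f \<subseteq> {y. (induced_graph R V)\<^sup>*\<^sup>* (f 0) y}" by blast
  moreover have "finite {y. (induced_graph R V)\<^sup>*\<^sup>* (f 0) y}"
    using fc in_V[of 0] unfolding finite_components_def by blast
  ultimately show ?thesis by (rule finite_subset)
qed

lemma ex_separating_open_sequence:
  obtains B :: "nat \<Rightarrow> 'x::{second_countable_topology, t1_space} set"
  where "\<And>n. open (B n)" and "\<And>x y. x \<noteq> y \<Longrightarrow> \<exists>n. x \<in> B n \<and> y \<notin> B n"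
proof -
  obtain \<B> :: "'x set set" where \<B>: "countable \<B>" "topological_basis \<B>"
    using ex_countable_basis by blast
  define B where "B = from_nat_into (insert UNIV \<B>)"
  have countable: "countable (insert UNIV \<B>)" using \<B>(1) by simp
  have "open (B n)" for n
  proof -
    have "B n \<in> insert UNIV \<B>" unfolding B_def by (rule from_nat_into) simp
    then show ?thesis using topological_basis_open[OF \<B>(2)] by auto
  qed
  moreover have "\<exists>n. x \<in> B n \<and> y \<notin> B n" if "x \<noteq> y" for x y
  proof -
    have "open (- {y})" by (rule open_Compl) simp
    moreover have "x \<in> - {y}" using that by simp
    ultimately obtain V where "V \<in> \<B>" "x \<in> V" "V \<subseteq> - {y}" by (rule topological_basisE[OF \<B>(2)])
    moreover obtain n where "B n = V"
      using from_nat_into_surj[OF countable, of V] \<open>V \<in> \<B>\<close> unfolding B_def by blast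
    ultimately show ?thesis by blast
  qed
  ultimately show ?thesis by (rule that)
qed

lemma asi_B_le_one_cover:
  assumes "asi_B G \<le> 1" and "0 < N"
  obtains U\<^sub>0 U\<^sub>1 where "U\<^sub>0 \<in> sets borel" "U\<^sub>0 \<union> U\<^sub>1 = UNIV"
    "finite_components (induced_graph (graph_power_le G N) U\<^sub>0) U\<^sub>0"
    "finite_components (induced_graph (graph_power_le G N) U\<^sub>1) U\<^sub>1"
proof -
  have ex: "\<exists>s. asi_witness G s"
  proof (rule ccontr)
    assume "\<not> ?thesis"
    then have "asi_B G = \<infinity>" unfolding asi_B_def by simp
    with assms(1) show False by simp
  qed
  then have "enat (LEAST s. asi_witness G s) \<le> 1" using assms(1) unfolding asi_B_def by simp
  moreover define s where "s = (LEAST s. asi_witness G s)"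
  ultimately have "asi_witness G s" "s \<le> 1" using LeastI_ex[OF ex] by (simp_all add: one_enat_def)
  then have "\<exists>U. (\<forall>i\<le>s. U i \<in> sets borel) \<and> (\<forall>i\<le>s. \<forall>j\<le>s. i \<noteq> j \<longrightarrow> U i \<inter> U j = {})
      \<and> (\<Union>i\<le>s. U i) = UNIV
      \<and> (\<forall>i\<le>s. finite_components (induced_graph (graph_power_le G N) (U i)) (U i))"
    using \<open>0 < N\<close> unfolding asi_witness_def by simp
  then obtain U where U: "\<forall>i\<le>s. U i \<in> sets borel" "(\<Union>i\<le>s. U i) = UNIV"
    "\<forall>i\<le>s. finite_components (induced_graph (graph_power_le G N) (U i)) (U i)"
    by blast
  consider "s = 0" | "s = 1" using \<open>s \<le> 1\<close> by linarith
  then show ?thesis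
  proof cases
    case 1
    then show ?thesis using U by (intro that[of "U 0" "{}"]) (simp_all add: finite_components_def)
  next
    case 2
    moreover have "{..1::nat} = {0, 1}" by auto
    ultimately show ?thesis using U by (intro that[of "U 0" "U 1"]) simp_all
  qed
qed


section \<open>First hitting times and parity colourings\<close>

definition hit_time :: "'x set \<Rightarrow> ('x \<Rightarrow> 'x) \<Rightarrow> 'x \<Rightarrow> nat" where
  "hit_time D f x = (LEAST k. 0 < k \<and> (f ^^ k) x \<in> D)"

definition parity_colour :: "'x set \<Rightarrow> ('x \<Rightarrow> 'x) \<Rightarrow> 'c \<Rightarrow> 'c \<Rightarrow> 'x \<Rightarrow> 'c" where
  "parity_colour D f A B x = (if odd (hit_time D f x) then A else B)"

definition cut_colour :: "'x set \<Rightarrow> ('x \<Rightarrow> 'x) \<Rightarrow> 'c \<Rightarrow> 'c \<Rightarrow> 'c \<Rightarrow> 'x \<Rightarrow> 'c" where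
  "cut_colour D f A B E x = (if x \<in> D then E else parity_colour D f A B x)"

lemma hit_time_eq_1: "f x \<in> D \<Longrightarrow> hit_time D f x = 1"
  unfolding hit_time_def by (rule Least_equality) auto

lemma hit_time_step:
  assumes "f x \<notin> D" and "\<exists>k>0. (f ^^ k) (f x) \<in> D"
  shows "hit_time D f x = Suc (hit_time D f (f x))"
proof -
  let ?P = "\<lambda>k. 0 < k \<and> (f ^^ k) x \<in> D" and ?Q = "\<lambda>k. 0 < k \<and> (f ^^ k) (f x) \<in> D"
  have shift: "?P (Suc k) \<longleftrightarrow> ?Q k" for k
  proof -
    have "(f ^^ Suc k) x = (f ^^ k) (f x)" by (simp only: funpow_Suc_right comp_apply)
    then show ?thesis using assms(1) by (cases k) auto
  qed
  obtain k where "?Q k" using assms(2) by blast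
  then have "?P (Suc k)" using shift by blast
  then have "(LEAST k. ?P k) = Suc (LEAST k. ?P (Suc k))" by (rule Least_Suc) simp
  also have "(\<lambda>k. ?P (Suc k)) = ?Q" using shift by blast
  finally show ?thesis unfolding hit_time_def .
qed

lemma parity_colour_proper:
  assumes "A \<noteq> B" and hits: "\<And>z. \<exists>k>0. (f ^^ k) z \<in> D"
    and even: "\<And>z. z \<in> D \<Longrightarrow> even (hit_time D f z)"
  shows "parity_colour D f A B (f x) \<noteq> parity_colour D f A B x"
proof (cases "f x \<in> D")
  case True
  then show ?thesis using even[of "f x"] \<open>A \<noteq> B\<close> hit_time_eq_1[of f x D]
    unfolding parity_colour_def by auto
next
  case False
  then show ?thesis using hit_time_step[OF False hits] \<open>A \<noteq> B\<close>
    unfolding parity_colour_def by auto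
qed

lemma cut_colour_proper:
  assumes "A \<noteq> B" "A \<noteq> E" "B \<noteq> E" and hits: "\<And>z. \<exists>k>0. (f ^^ k) z \<in> D"
    and matching: "\<And>z. z \<in> D \<Longrightarrow> f z \<notin> D"
  shows "cut_colour D f A B E (f x) \<noteq> cut_colour D f A B E x"
proof (cases "f x \<in> D")
  case True
  then show ?thesis using matching[of x] assms(2) hit_time_eq_1[of f x D]
    unfolding cut_colour_def parity_colour_def by auto
next
  case False
  then show ?thesis using hit_time_step[OF False hits] assms(1-3)
    unfolding cut_colour_def parity_colour_def by auto
qed

lemma hit_time_measurable:
  assumes "f \<in> M \<rightarrow>\<^sub>M M" and [measurable]: "D \<in> sets M"
  shows "hit_time D f \<in> M \<rightarrow>\<^sub>M count_space UNIV"
proof -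
  have [measurable]: "f ^^ k \<in> M \<rightarrow>\<^sub>M M" for k
    using funpow_measurable[OF assms(1)] .
  show ?thesis unfolding hit_time_def[abs_def] by measurable
qed


section \<open>The lexicographic order of a separating sequence\<close>

text \<open>The pull-back of the lexicographic order on 2^\<nat> along x \<mapsto> (\<lambda>n. x \<in> B n).\<close>

definition lex_less :: "(nat \<Rightarrow> 'x set) \<Rightarrow> 'x \<Rightarrow> 'x \<Rightarrow> bool" where
  "lex_less B x y \<longleftrightarrow> (\<exists>n. (\<forall>m<n. x \<in> B m \<longleftrightarrow> y \<in> B m) \<and> x \<notin> B n \<and> y \<in> B n)"

lemma lex_less_irrefl: "\<not> lex_less B x x"
  unfolding lex_less_def by auto

lemma lex_less_trans:
  assumes "lex_less B x y" "lex_less B y z"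
  shows "lex_less B x z"
proof -
  obtain n1 where n1: "\<forall>m<n1. x \<in> B m \<longleftrightarrow> y \<in> B m" "x \<notin> B n1" "y \<in> B n1"
    using assms(1) unfolding lex_less_def by blast
  obtain n2 where n2: "\<forall>m<n2. y \<in> B m \<longleftrightarrow> z \<in> B m" "y \<notin> B n2" "z \<in> B n2"
    using assms(2) unfolding lex_less_def by blast
  consider "n1 < n2" | "n2 < n1" | "n1 = n2" by linarith
  then show ?thesis
  proof cases
    case 1
    then show ?thesis using n1 n2 unfolding lex_less_def by (intro exI[of _ n1]) auto
  next
    case 2
    then show ?thesis using n1 n2 unfolding lex_less_def by (intro exI[of _ n2]) auto
  next
    case 3
    then show ?thesis using n1 n2 by simp
  qed
qed

lemma lex_less_asym: "lex_less B x y \<Longrightarrow> \<not> lex_less B y x"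
  using lex_less_trans lex_less_irrefl by metis

lemma lex_less_linear:
  assumes sep: "\<And>x y. x \<noteq> y \<Longrightarrow> \<exists>n. x \<in> B n \<and> y \<notin> B n" and "x \<noteq> y"
  shows "lex_less B x y \<or> lex_less B y x"
proof -
  define n where "n = (LEAST n. (x \<in> B n) \<noteq> (y \<in> B n))"
  have "(x \<in> B n) \<noteq> (y \<in> B n)"
    unfolding n_def by (rule LeastI_ex) (use sep[OF \<open>x \<noteq> y\<close>] in blast)
  moreover have "\<forall>m<n. x \<in> B m \<longleftrightarrow> y \<in> B m"
    using not_less_Least unfolding n_def by blast
  ultimately show ?thesis unfolding lex_less_def by (cases "x \<in> B n") auto
qed

lemma ex_lex_least:
  assumes sep: "\<And>x y. x \<noteq> y \<Longrightarrow> \<exists>n. x \<in> B n \<and> y \<notin> B n"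
    and "finite A" "A \<noteq> {}"
  shows "\<exists>m\<in>A. \<forall>z\<in>A. z \<noteq> m \<longrightarrow> lex_less B m z"
  using \<open>finite A\<close> \<open>A \<noteq> {}\<close>
proof (induction A rule: finite_ne_induct)
  case (insert x F)
  then obtain m where m: "m \<in> F" "\<forall>z\<in>F. z \<noteq> m \<longrightarrow> lex_less B m z" by blast
  show ?case
  proof (cases "lex_less B x m")
    case True
    then show ?thesis using m lex_less_trans by (metis insertCI insertE)
  next
    case False
    then have "lex_less B m x" using lex_less_linear[OF sep, of x m] m insert.hyps by auto
    then show ?thesis using m by blast
  qed
qed simp

lemma lex_less_measurable:
  assumes [measurable]: "\<And>n. B n \<in> sets N"
    and [measurable]: "f \<in> M \<rightarrow>\<^sub>M N" "g \<in> M \<rightarrow>\<^sub>M N"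
  shows "Measurable.pred M (\<lambda>x. lex_less B (f x) (g x))"
  unfolding lex_less_def by measurable


section \<open>Periodic maps\<close>

definition orbit_least :: "(nat \<Rightarrow> 'x set) \<Rightarrow> ('x \<Rightarrow> 'x) \<Rightarrow> nat \<Rightarrow> 'x set" where
  "orbit_least B f n = {y. \<forall>j. 0 < j \<and> j < n \<longrightarrow> lex_less B y ((f ^^ j) y)}"

lemma orbit_least_hit:
  assumes sep: "\<And>x y. x \<noteq> y \<Longrightarrow> \<exists>n. x \<in> B n \<and> y \<notin> B n"
    and "0 < n" and period: "\<And>x. (f ^^ n) x = x"
    and aperiodic: "\<And>x j. 0 < j \<Longrightarrow> j < n \<Longrightarrow> (f ^^ j) x \<noteq> x"
  shows "\<exists>k>0. (f ^^ k) z \<in> orbit_least B f n"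
proof -
  define orbit where "orbit = (\<lambda>j. (f ^^ j) z) ` {..<n}"
  have "finite orbit" "orbit \<noteq> {}" using \<open>0 < n\<close> unfolding orbit_def by auto
  then obtain m where "m \<in> orbit" and m_least: "\<forall>w\<in>orbit. w \<noteq> m \<longrightarrow> lex_less B m w"
    using ex_lex_least[OF sep] by blast
  then obtain j\<^sub>0 where "j\<^sub>0 < n" and m: "m = (f ^^ j\<^sub>0) z" unfolding orbit_def by auto
  have "m \<in> orbit_least B f n"
    unfolding orbit_least_def
  proof (intro CollectI allI impI)
    fix j assume j: "0 < j \<and> j < n"
    have "(f ^^ j) m = (f ^^ (j + j\<^sub>0)) z" unfolding m by (simp add: funpow_add)
    also have "\<dots> = (f ^^ ((j + j\<^sub>0) mod n)) z" by (simp add: funpow_mod_eq period)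
    finally have "(f ^^ j) m \<in> orbit" using \<open>0 < n\<close> unfolding orbit_def by auto
    then show "lex_less B m ((f ^^ j) m)" using m_least aperiodic j by metis
  qed
  show ?thesis
  proof (cases "j\<^sub>0 = 0")
    case True
    then show ?thesis using \<open>m \<in> orbit_least B f n\<close> \<open>0 < n\<close> period m by (intro exI[of _ n]) simp
  next
    case False
    then show ?thesis using \<open>m \<in> orbit_least B f n\<close> m by blast
  qed
qed

lemma hit_time_orbit_least:
  assumes "0 < n" and period: "\<And>x. (f ^^ n) x = x" and "z \<in> orbit_least B f n"
  shows "hit_time (orbit_least B f n) f z = n"
  unfolding hit_time_def
proof (rule Least_equality)
  show "0 < n \<and> (f ^^ n) z \<in> orbit_least B f n" using assms by simp
next
  fix k assume k: "0 < k \<and> (f ^^ k) z \<in> orbit_least B f n"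
  show "n \<le> k"
  proof (rule ccontr)
    assume "\<not> n \<le> k"
    define w where "w = (f ^^ k) z"
    have "lex_less B z w"
      using \<open>z \<in> orbit_least B f n\<close> k \<open>\<not> n \<le> k\<close> unfolding orbit_least_def w_def by simp
    moreover have "lex_less B w ((f ^^ (n - k)) w)"
      using k \<open>\<not> n \<le> k\<close> unfolding w_def orbit_least_def by simp
    moreover have "(f ^^ (n - k)) w = z"
      using period[of z] \<open>\<not> n \<le> k\<close> unfolding w_def by (simp flip: funpow_add[THEN fun_cong, unfolded comp_def])
    ultimately show False using lex_less_asym by metis
  qed
qed

lemma orbit_least_sets:
  assumes "\<And>n. B n \<in> sets borel" and "f \<in> borel \<rightarrow>\<^sub>M borel"
  shows "orbit_least B f n \<in> sets borel"
proof -
  have "Measurable.pred borel (\<lambda>y. lex_less B y ((f ^^ j) y))" for j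
    using lex_less_measurable[OF assms(1) measurable_ident_sets[OF refl] funpow_measurable[OF assms(2)]]
    by simp
  then have "Measurable.pred borel (\<lambda>y. \<forall>j\<in>{0<..<n}. lex_less B y ((f ^^ j) y))"
    by (intro pred_intros_countable_bounded(3))
  moreover have "orbit_least B f n = {y \<in> space borel. \<forall>j\<in>{0<..<n}. lex_less B y ((f ^^ j) y)}"
    unfolding orbit_least_def by auto
  ultimately show ?thesis by (simp add: pred_def)
qed


locale marked_free_borel_action =
  fixes \<Gamma> :: "('g, 'b) monoid_scheme" (structure) and S :: "'g set"
    and a :: "'g \<Rightarrow> 'x::topological_space \<Rightarrow> 'x"
  assumes marked: "marked_group \<Gamma> S"
    and action: "borel_action \<Gamma> a"
    and free: "free_action \<Gamma> a"
begin

sublocale group \<Gamma> using marked by (simp add: marked_group_def)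

lemma S_carrier [simp]: "s \<in> S \<Longrightarrow> s \<in> carrier \<Gamma>"
  and finite_S: "finite S"
  and one_notin_S: "\<one> \<notin> S"
  and inv_in_S [simp]: "s \<in> S \<Longrightarrow> inv s \<in> S"
  using marked by (auto simp: marked_group_def)

lemma inv_inv_S [simp]: "g \<in> S \<Longrightarrow> inv (inv g) = g"
  by simp

lemma act_one [simp]: "a \<one> x = x"
  and act_mult: "g \<in> carrier \<Gamma> \<Longrightarrow> h \<in> carrier \<Gamma> \<Longrightarrow> a (g \<otimes> h) x = a g (a h x)"
  and act_measurable [measurable]: "g \<in> carrier \<Gamma> \<Longrightarrow> a g \<in> borel \<rightarrow>\<^sub>M borel"
  using action by (auto simp: borel_action_def)

lemma act_fixed_imp_one: "g \<in> carrier \<Gamma> \<Longrightarrow> a g x = x \<Longrightarrow> g = \<one>"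
  using free unfolding free_action_def by blast

lemma act_inv_cancel [simp]:
  assumes "g \<in> carrier \<Gamma>"
  shows "a (inv g) (a g x) = x" and "a g (a (inv g) x) = x"
  using assms by (simp_all flip: act_mult)

lemma act_eq_imp_eq:
  assumes "g \<in> carrier \<Gamma>" "h \<in> carrier \<Gamma>" and "a g x = a h x"
  shows "g = h"
proof -
  have "a (inv h \<otimes> g) x = x" using assms by (simp add: act_mult)
  then have "inv h \<otimes> g = \<one>" using assms by (intro act_fixed_imp_one) auto
  moreover have "g = h \<otimes> (inv h \<otimes> g)" using assms by (simp flip: m_assoc)
  ultimately show ?thesis using assms by simp
qed

lemma act_pow: "h \<in> carrier \<Gamma> \<Longrightarrow> a (h [^] k) = a h ^^ k"
  by (induction k) (simp_all add: fun_eq_iff act_mult funpow_swap1)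

lemma act_funpow_fixed_iff:
  assumes "h \<in> carrier \<Gamma>"
  shows "(a h ^^ k) x = x \<longleftrightarrow> ord h dvd k"
proof -
  have "(a h ^^ k) x = x \<longleftrightarrow> h [^] k = \<one>"
    using act_fixed_imp_one[of "h [^] k" x] assms by (auto simp: act_pow[OF assms, symmetric])
  then show ?thesis using pow_eq_id[OF assms] by simp
qed

lemma inj_act_orbit:
  assumes "h \<in> carrier \<Gamma>" and "ord h = 0"
  shows "inj (\<lambda>k. (a h ^^ k) x)"
proof -
  have ordered: "i = j" if eq: "(a h ^^ i) x = (a h ^^ j) x" and "i \<le> j" for i j
  proof -
    have "(a h ^^ (j - i)) ((a h ^^ i) x) = (a h ^^ j) x"
      using fun_cong[OF funpow_add[where f = "a h" and m = "j - i" and n = i], of x] \<open>i \<le> j\<close>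
      by simp
    also have "\<dots> = (a h ^^ i) x" by (rule eq[symmetric])
    finally have "ord h dvd (j - i)" by (simp only: act_funpow_fixed_iff[OF assms(1)])
    with assms(2) \<open>i \<le> j\<close> show "i = j" by simp
  qed
  show ?thesis
  proof (rule injI)
    fix i j assume "(a h ^^ i) x = (a h ^^ j) x"
    then show "i = j" using ordered[of i j] ordered[of j i] by (cases "i \<le> j") auto
  qed
qed

abbreviation G :: "'x \<Rightarrow> 'x \<Rightarrow> bool" where "G \<equiv> schreier_graph a S"

lemma schreier_graph_iff: "G x y \<longleftrightarrow> (\<exists>s\<in>S. y = a s x)"
  using act_fixed_imp_one S_carrier one_notin_S unfolding schreier_graph_def by metis

lemma schreier_graph_act: "s \<in> S \<Longrightarrow> G x (a s x)"
  by (auto simp: schreier_graph_iff)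

lemma symp_schreier_graph: "symp G"
proof (rule sympI)
  fix x y assume "G x y"
  then obtain s where "s \<in> S" "y = a s x" by (auto simp: schreier_graph_iff)
  then have "inv s \<in> S" "x = a (inv s) y" by simp_all
  then show "G y x" by (metis schreier_graph_act)
qed


subsection \<open>Neighbourhoods and shells\<close>

fun word_ball :: "nat \<Rightarrow> 'g set" where
  "word_ball 0 = {\<one>}"
| "word_ball (Suc r) = word_ball r \<union> (\<lambda>(w, s). w \<otimes> s) ` (word_ball r \<times> S)"

lemma word_ball_carrier [simp]: "g \<in> word_ball r \<Longrightarrow> g \<in> carrier \<Gamma>"
  by (induction r arbitrary: g) auto

lemma finite_word_ball: "finite (word_ball r)"
  by (induction r) (simp_all add: finite_S)

lemma word_ball_mono: "r \<le> r' \<Longrightarrow> word_ball r \<subseteq> word_ball r'"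
  by (induction r' rule: dec_induct) auto

lemma word_ball_path:
  assumes "g \<in> word_ball r"
  shows "\<exists>j\<le>r. (G ^^ j) z (a g z)"
  using assms
proof (induction r arbitrary: g z)
  case (Suc r)
  show ?case
  proof (cases "g \<in> word_ball r")
    case True
    then show ?thesis using Suc.IH le_SucI by blast
  next
    case False
    then obtain w s where ws: "w \<in> word_ball r" "s \<in> S" "g = w \<otimes> s" using Suc.prems by auto
    then obtain j where "j \<le> r" "(G ^^ j) (a s z) (a w (a s z))" using Suc.IH by blast
    moreover have "G z (a s z)" using ws(2) by (rule schreier_graph_act)
    moreover have "a g z = a w (a s z)" using ws by (simp add: act_mult)
    ultimately show ?thesis by (metis Suc_le_mono relpowp_Suc_I2)
  qed
qed simp

lemma translates_of_adjacent_close: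
  assumes "g \<in> word_ball r" "g' \<in> word_ball r" "G z z'" "2 * r + 1 \<le> N"
  shows "a g' z' = a g z \<or> graph_power_le G N (a g z) (a g' z')"
proof -
  obtain i where i: "i \<le> r" "(G ^^ i) z (a g z)" using word_ball_path[OF assms(1)] by blast
  obtain j where j: "j \<le> r" "(G ^^ j) z' (a g' z')" using word_ball_path[OF assms(2)] by blast
  have "(G ^^ Suc j) z (a g' z')" using assms(3) j(2) by (rule relpowp_Suc_I2)
  with relpowp_sym[OF symp_schreier_graph i(2)] have path: "(G ^^ (i + Suc j)) (a g z) (a g' z')"
    unfolding relpowp_add by blast
  have "i + Suc j \<le> N" using i(1) j(1) assms(4) by linarith
  then show ?thesis using path unfolding graph_power_le_def by metis
qed

definition nbhd :: "'x set \<Rightarrow> nat \<Rightarrow> 'x set" where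
  "nbhd U r = {x. \<exists>g\<in>word_ball r. a g x \<in> U}"

fun shell :: "'x set \<Rightarrow> nat \<Rightarrow> 'x set" where
  "shell U 0 = nbhd U 0"
| "shell U (Suc r) = nbhd U (Suc r) - nbhd U r"

lemma subset_nbhd: "U \<subseteq> nbhd U r"
  using word_ball_mono[of 0 r] unfolding nbhd_def by (force intro: bexI[of _ \<one>])

lemma nbhd_mono: "r \<le> r' \<Longrightarrow> nbhd U r \<subseteq> nbhd U r'"
  using word_ball_mono unfolding nbhd_def by blast

lemma nbhd_step:
  assumes "x \<in> nbhd U r" and "s \<in> S"
  shows "a s x \<in> nbhd U (Suc r)"
proof -
  obtain g where g: "g \<in> word_ball r" "a g x \<in> U" using assms(1) unfolding nbhd_def by blast
  then have "g \<otimes> inv s \<in> word_ball (Suc r)" using assms(2) by force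
  moreover have "a (g \<otimes> inv s) (a s x) \<in> U" using g assms(2) by (simp add: act_mult)
  ultimately show ?thesis unfolding nbhd_def by blast
qed

lemma shell_unique:
  assumes "x \<in> shell U r" "x \<in> shell U r'"
  shows "r = r'"
proof -
  have "\<not> r < r'" if "x \<in> shell U r" "x \<in> shell U r'" for r r'
  proof
    assume "r < r'"
    then obtain q where "r' = Suc q" "r \<le> q" by (cases r') auto
    then show False using that nbhd_mono[of r q U] by (cases r) auto
  qed
  then show ?thesis using assms by (meson linorder_neqE_nat)
qed

lemma nbhd_sets:
  assumes "U \<in> sets borel"
  shows "nbhd U r \<in> sets borel"
proof -
  have "nbhd U r = (\<Union>g\<in>word_ball r. a g -` U)" unfolding nbhd_def by auto
  moreover have "a g -` U \<in> sets borel" if "g \<in> word_ball r" for g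
    using measurable_sets[OF act_measurable assms] that by simp
  ultimately show ?thesis using finite_word_ball by (simp add: sets.finite_UN)
qed

lemma shell_sets: "U \<in> sets borel \<Longrightarrow> shell U r \<in> sets borel"
  by (cases r) (auto simp: nbhd_sets)


subsection \<open>Rays of generators of infinite order\<close>

lemma ray_meets:
  assumes "h \<in> S" "ord h = 0" and "0 < N" and cover: "U\<^sub>0 \<union> U\<^sub>1 = UNIV"
    and fc\<^sub>1: "finite_components (induced_graph (graph_power_le G N) U\<^sub>1) U\<^sub>1"
  shows "\<exists>k. (a h ^^ k) x \<in> U\<^sub>0"
proof (rule ccontr)
  assume avoids: "\<not> ?thesis"
  define y where "y k = (a h ^^ k) x" for k
  have inj: "inj y" unfolding y_def using inj_act_orbit assms by simp
  have "graph_power_le G N (y k) (y (Suc k))" for k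
  proof -
    have "G (y k) (y (Suc k))" using schreier_graph_act[OF \<open>h \<in> S\<close>] unfolding y_def by simp
    then have "(G ^^ 1) (y k) (y (Suc k))" by (simp only: relpowp_1)
    moreover have "y k \<noteq> y (Suc k)" using inj by (simp add: inj_eq)
    ultimately show ?thesis using \<open>0 < N\<close> unfolding graph_power_le_def by (metis Suc_leI One_nat_def)
  qed
  moreover have "y k \<in> U\<^sub>1" for k using avoids cover unfolding y_def by blast
  ultimately have "finite (range y)"
    by (intro finite_range_if_chain_in_finite_components[OF fc\<^sub>1]) blast+
  then have "finite (UNIV :: nat set)" using inj by (rule finite_imageD)
  then show False by simp
qed

lemma ray_leaves_nbhd:
  assumes "h \<in> S" "ord h = 0" and "2 * r + 1 \<le> N"
    and fc\<^sub>0: "finite_components (induced_graph (graph_power_le G N) U\<^sub>0) U\<^sub>0"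
  shows "\<exists>k>k\<^sub>0. (a h ^^ k) x \<notin> nbhd U\<^sub>0 r"
proof (rule ccontr)
  assume stays: "\<not> ?thesis"
  define y where "y k = (a h ^^ (Suc k\<^sub>0 + k)) x" for k
  have "inj (\<lambda>k. (a h ^^ k) x)" using inj_act_orbit assms by simp
  then have inj: "inj y" unfolding y_def inj_def by (metis add_left_cancel)
  have "y k \<in> nbhd U\<^sub>0 r" for k
  proof -
    have "k\<^sub>0 < Suc k\<^sub>0 + k" by simp
    then show ?thesis using stays unfolding y_def by blast
  qed
  then have "\<forall>k. \<exists>g\<in>word_ball r. a g (y k) \<in> U\<^sub>0" unfolding nbhd_def by blast
  then obtain g where g: "\<And>k. g k \<in> word_ball r" "\<And>k. a (g k) (y k) \<in> U\<^sub>0" by metis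
  define u where "u k = a (g k) (y k)" for k
  \<comment> \<open>Consecutive u k are joined by a path of length at most 2r + 1 through the ray, so all of
    them lie in one finite component of U0; but the ray is recovered from them by finitely many words.\<close>
  have edge: "G (y k) (y (Suc k))" for k using schreier_graph_act[OF \<open>h \<in> S\<close>] unfolding y_def by simp
  have "u (Suc k) = u k \<or> graph_power_le G N (u k) (u (Suc k))" for k
    unfolding u_def by (rule translates_of_adjacent_close[OF g(1) g(1) edge assms(3)])
  then have "finite (range u)"
    using g(2) unfolding u_def by (intro finite_range_if_chain_in_finite_components[OF fc\<^sub>0]) blast+
  moreover have "range y \<subseteq> (\<lambda>(g, z). a (inv g) z) ` (word_ball r \<times> range u)"
  proof
    fix z assume "z \<in> range y"
    then obtain k where "z = y k" by blast
    then have "z = a (inv (g k)) (u k)" using word_ball_carrier[OF g(1)] unfolding u_def by simp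
    then show "z \<in> (\<lambda>(g, z). a (inv g) z) ` (word_ball r \<times> range u)" using g(1) by force
  qed
  ultimately have "finite (range y)"
    using finite_word_ball by (meson finite_SigmaI finite_imageI finite_subset)
  then have "finite (UNIV :: nat set)" using inj by (rule finite_imageD)
  then show False by simp
qed

lemma ray_crosses_shells:
  assumes "p \<in> S" "ord p = 0" and "2 \<le> c" "2 * c \<le> N + 1" and cover: "U\<^sub>0 \<union> U\<^sub>1 = UNIV"
    and fc\<^sub>0: "finite_components (induced_graph (graph_power_le G N) U\<^sub>0) U\<^sub>0"
    and fc\<^sub>1: "finite_components (induced_graph (graph_power_le G N) U\<^sub>1) U\<^sub>1"
  shows "\<exists>k>0. (a (inv p) ^^ k) x \<in> shell U\<^sub>0 c \<and> a p ((a (inv p) ^^ k) x) \<in> shell U\<^sub>0 (c - 1)"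
proof -
  define h where "h = inv p"
  have h: "h \<in> S" "ord h = 0" using assms(1,2) unfolding h_def by simp_all
  define y where "y k = (a h ^^ k) x" for k
  have "0 < N" "2 * (c - 1) + 1 \<le> N" using assms(3,4) by linarith+
  obtain k\<^sub>0 where "y k\<^sub>0 \<in> U\<^sub>0" using ray_meets[OF h \<open>0 < N\<close> cover fc\<^sub>1] unfolding y_def by blast
  then have start: "y k\<^sub>0 \<in> nbhd U\<^sub>0 (c - 1)" using subset_nbhd by blast
  obtain K where "k\<^sub>0 < K" and stop: "y K \<notin> nbhd U\<^sub>0 (c - 1)"
    using ray_leaves_nbhd[OF h \<open>2 * (c - 1) + 1 \<le> N\<close> fc\<^sub>0] unfolding y_def by blast
  obtain m where m: "y m \<in> nbhd U\<^sub>0 (c - 1)" "y (Suc m) \<notin> nbhd U\<^sub>0 (c - 1)"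
    using first_exit[where P = "\<lambda>k. y k \<in> nbhd U\<^sub>0 (c - 1)", OF less_imp_le[OF \<open>k\<^sub>0 < K\<close>] start stop]
    by blast
  have y_Suc: "y (Suc m) = a h (y m)" unfolding y_def by simp
  obtain d where c: "c = Suc (Suc d)" using \<open>2 \<le> c\<close> by (metis add_2_eq_Suc le_Suc_ex)
  have "y (Suc m) \<in> shell U\<^sub>0 c" using m nbhd_step[OF m(1) h(1)] y_Suc c by simp
  moreover have "y m \<in> shell U\<^sub>0 (c - 1)"
  proof -
    have "y m \<notin> nbhd U\<^sub>0 d" using m(2) nbhd_step[OF _ h(1), of "y m" U\<^sub>0 d] y_Suc c by auto
    then show ?thesis using m(1) c by simp
  qed
  moreover have "a p (y (Suc m)) = y m"
    using y_Suc assms(1) unfolding h_def by simp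
  ultimately show ?thesis unfolding y_def h_def by (intro exI[of _ "Suc m"]) simp
qed

end


section \<open>The colouring\<close>

locale asi_one_colouring = marked_free_borel_action \<Gamma> S a
  for \<Gamma> :: "('g, 'b) monoid_scheme" (structure) and S
    and a :: "'g \<Rightarrow> 'x::{second_countable_topology, t2_space} \<Rightarrow> 'x" +
  fixes U\<^sub>0 U\<^sub>1 :: "'x set" and N :: nat and B :: "nat \<Rightarrow> 'x set" and idx :: "'g \<Rightarrow> nat"
  assumes U\<^sub>0_sets: "U\<^sub>0 \<in> sets borel"
    and cover: "U\<^sub>0 \<union> U\<^sub>1 = UNIV"
    and fc\<^sub>0: "finite_components (induced_graph (graph_power_le G N) U\<^sub>0) U\<^sub>0"
    and fc\<^sub>1: "finite_components (induced_graph (graph_power_le G N) U\<^sub>1) U\<^sub>1"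
    and N_large: "4 * card S \<le> N"
    and B_sets: "\<And>n. B n \<in> sets borel"
    and B_separating: "\<And>x y. x \<noteq> y \<Longrightarrow> \<exists>n. x \<in> B n \<and> y \<notin> B n"
    and idx_inj: "inj_on idx S"
    and idx_less: "s \<in> S \<Longrightarrow> idx s < card S"
    and even_ord: "s \<in> S \<Longrightarrow> ord s \<noteq> 0 \<Longrightarrow> even (ord s)"
begin

definition cut_level :: "'g \<Rightarrow> nat" where
  "cut_level p = 2 * idx p + 2"

definition cut_set :: "'g \<Rightarrow> 'x set" where
  "cut_set p = (if ord p = 0
     then {y. y \<in> shell U\<^sub>0 (cut_level p) \<and> a p y \<in> shell U\<^sub>0 (cut_level p - 1)}
     else orbit_least B (a (inv p)) (ord p))"

text \<open>orbit_colour p x is the colour of the edge {x, p x}.\<close>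

definition orbit_colour :: "'g \<Rightarrow> 'x \<Rightarrow> nat" where
  "orbit_colour p = (if ord p = 0
     then cut_colour (cut_set p) (a (inv p)) (idx p) (idx (inv p)) (card S)
     else parity_colour (cut_set p) (a (inv p)) (idx p) (idx (inv p)))"

definition edge_colour :: "'g \<Rightarrow> 'x \<Rightarrow> nat" where
  "edge_colour g x = (if inv g = g then idx g
     else if idx g < idx (inv g) then orbit_colour g x else orbit_colour (inv g) (a g x))"

definition colouring :: "'x \<Rightarrow> 'x \<Rightarrow> nat" where
  "colouring x y = edge_colour (THE g. g \<in> S \<and> a g x = y) x"

lemma idx_neq: "g \<in> S \<Longrightarrow> d \<in> S \<Longrightarrow> g \<noteq> d \<Longrightarrow> idx g \<noteq> idx d"
  using idx_inj by (metis inj_on_contraD)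

lemma cut_set_hit:
  assumes "p \<in> S"
  shows "\<exists>k>0. (a (inv p) ^^ k) z \<in> cut_set p"
proof (cases "ord p = 0")
  case True
  have "2 \<le> cut_level p" "2 * cut_level p \<le> N + 1"
    using idx_less[OF assms] N_large unfolding cut_level_def by auto
  then show ?thesis
    using ray_crosses_shells[OF assms True _ _ cover fc\<^sub>0 fc\<^sub>1] True unfolding cut_set_def by auto
next
  case False
  have "inv p \<in> carrier \<Gamma>" "ord (inv p) = ord p" using assms(1) by simp_all
  then show ?thesis
    using orbit_least_hit[OF B_separating, of "ord p" "a (inv p)"] act_funpow_fixed_iff False
    unfolding cut_set_def by (auto simp: nat_dvd_not_less)
qed

lemma cut_set_matching:
  assumes "p \<in> S" "ord p = 0" and "z \<in> cut_set p"
  shows "a (inv p) z \<notin> cut_set p"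
proof
  assume "a (inv p) z \<in> cut_set p"
  then have "z \<in> shell U\<^sub>0 (cut_level p - 1)"
    using assms unfolding cut_set_def by simp
  moreover have "z \<in> shell U\<^sub>0 (cut_level p)" using assms unfolding cut_set_def by simp
  ultimately show False using shell_unique unfolding cut_level_def by fastforce
qed

lemma even_hit_time_cut_set:
  assumes "p \<in> S" "ord p \<noteq> 0" and "z \<in> cut_set p"
  shows "even (hit_time (cut_set p) (a (inv p)) z)"
proof -
  have "inv p \<in> carrier \<Gamma>" "ord (inv p) = ord p" using assms(1) by simp_all
  then have "hit_time (cut_set p) (a (inv p)) z = ord p"
    using hit_time_orbit_least[of "ord p" "a (inv p)" z B] assms act_funpow_fixed_iff
    unfolding cut_set_def by auto
  then show ?thesis using even_ord assms by simp
qed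

lemma orbit_colour_proper:
  assumes "p \<in> S" "p \<noteq> inv p"
  shows "orbit_colour p (a (inv p) x) \<noteq> orbit_colour p x"
proof -
  have colours: "idx p \<noteq> idx (inv p)" "idx p \<noteq> card S" "idx (inv p) \<noteq> card S"
    using assms idx_neq idx_less[of p] idx_less[of "inv p"] by auto
  show ?thesis
  proof (cases "ord p = 0")
    case True
    then show ?thesis
      using cut_colour_proper[OF colours cut_set_hit[OF assms(1)] cut_set_matching[OF assms(1) True]]
      unfolding orbit_colour_def by simp
  next
    case False
    then show ?thesis
      using parity_colour_proper[OF colours(1) cut_set_hit[OF assms(1)]
          even_hit_time_cut_set[OF assms(1) False]]
      unfolding orbit_colour_def by simp
  qed
qed

lemma orbit_colour_spare:
  assumes "p \<in> S" "orbit_colour p x = card S"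
  shows "ord p = 0 \<and> x \<in> cut_set p"
  using assms idx_less[of p] idx_less[of "inv p"]
  unfolding orbit_colour_def cut_colour_def parity_colour_def by (auto split: if_splits)

lemma edge_colour_range:
  assumes "g \<in> S"
  shows "edge_colour g x \<in> {idx g, idx (inv g), card S}"
  using assms unfolding edge_colour_def orbit_colour_def cut_colour_def parity_colour_def by auto

lemma edge_colour_inv:
  assumes "g \<in> S"
  shows "edge_colour (inv g) (a g x) = edge_colour g x"
proof -
  consider "inv g = g" | "inv g \<noteq> g" "g \<noteq> inv g" "idx g < idx (inv g)"
    | "inv g \<noteq> g" "g \<noteq> inv g" "idx (inv g) < idx g"
    using idx_neq[of g "inv g"] assms by fastforce
  then show ?thesis by cases (use assms in \<open>simp_all add: edge_colour_def\<close>)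
qed

lemma edge_colour_spare:
  assumes "g \<in> S" "edge_colour g x = card S"
  shows "\<exists>q\<in>{g, inv g}. x \<in> shell U\<^sub>0 (cut_level q) \<or> x \<in> shell U\<^sub>0 (cut_level q - 1)"
proof -
  have "inv g \<noteq> g"
  proof
    assume "inv g = g"
    then have "edge_colour g x = idx g" by (simp add: edge_colour_def)
    then show False using assms idx_less[of g] by simp
  qed
  show ?thesis
  proof (cases "idx g < idx (inv g)")
    case True
    then have "ord g = 0 \<and> x \<in> cut_set g"
      using assms \<open>inv g \<noteq> g\<close> orbit_colour_spare[of g x] unfolding edge_colour_def by simp
    then show ?thesis unfolding cut_set_def by auto
  next
    case False
    then have "ord (inv g) = 0" and "a g x \<in> cut_set (inv g)"
      using assms \<open>inv g \<noteq> g\<close> orbit_colour_spare[of "inv g" "a g x"] unfolding edge_colour_def by simp_all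
    then have "a (inv g) (a g x) \<in> shell U\<^sub>0 (cut_level (inv g) - 1)" unfolding cut_set_def by simp
    then show ?thesis using assms by auto
  qed
qed

lemma edge_colour_inverse_proper:
  assumes "g \<in> S" "inv g \<noteq> g"
  shows "edge_colour g x \<noteq> edge_colour (inv g) x"
proof -
  have ne: "g \<noteq> inv g" using assms(2) by simp
  then have "idx g \<noteq> idx (inv g)" using assms(1) idx_neq by simp
  then consider "idx g < idx (inv g)" | "idx (inv g) < idx g" by linarith
  then show ?thesis
  proof cases
    case 1
    then have "edge_colour g x = orbit_colour g x"
      and "edge_colour (inv g) x = orbit_colour g (a (inv g) x)"
      using assms ne by (simp_all add: edge_colour_def)
    then show ?thesis using orbit_colour_proper[OF assms(1) ne] by metis
  next
    case 2
    then have "edge_colour (inv g) x = orbit_colour (inv g) x"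
      and "edge_colour g x = orbit_colour (inv g) (a g x)"
      using assms ne by (simp_all add: edge_colour_def)
    then show ?thesis using orbit_colour_proper[of "inv g" x] assms by simp
  qed
qed

lemma edge_colour_other_pair_proper:
  assumes "g \<in> S" "d \<in> S" "d \<noteq> g" "d \<noteq> inv g"
  shows "edge_colour g x \<noteq> edge_colour d x"
proof
  assume eq: "edge_colour g x = edge_colour d x"
  have "inv g \<noteq> inv d" using assms by (metis inv_inv_S)
  then have disjoint: "idx q \<noteq> idx q'" if "q \<in> {g, inv g}" "q' \<in> {d, inv d}" for q q'
    using that assms idx_neq by (metis inv_inv_S inv_in_S insertE empty_iff)
  have "edge_colour g x = card S"
  proof (rule ccontr)
    assume "edge_colour g x \<noteq> card S"
    then have "edge_colour g x \<in> {idx g, idx (inv g)}" "edge_colour d x \<in> {idx d, idx (inv d)}"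
      using edge_colour_range[OF assms(1), of x] edge_colour_range[OF assms(2), of x] eq by auto
    then show False
      using eq disjoint[of g d] disjoint[of g "inv d"] disjoint[of "inv g" d] disjoint[of "inv g" "inv d"]
      by auto
  qed
  then obtain q q' where q: "q \<in> {g, inv g}" "q' \<in> {d, inv d}"
    and "x \<in> shell U\<^sub>0 (cut_level q) \<or> x \<in> shell U\<^sub>0 (cut_level q - 1)"
    and "x \<in> shell U\<^sub>0 (cut_level q') \<or> x \<in> shell U\<^sub>0 (cut_level q' - 1)"
    using edge_colour_spare[OF assms(1)] edge_colour_spare[OF assms(2)] eq by metis
  then have "idx q = idx q'" using shell_unique unfolding cut_level_def by fastforce
  then show False using disjoint q by blast
qed

lemma edge_colour_proper:
  assumes "g \<in> S" "d \<in> S" "g \<noteq> d"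
  shows "edge_colour g x \<noteq> edge_colour d x"
proof (cases "d = inv g")
  case True
  then show ?thesis using edge_colour_inverse_proper assms by simp
qed (use edge_colour_other_pair_proper assms in simp)

lemma colouring_eq:
  assumes "g \<in> S"
  shows "colouring x (a g x) = edge_colour g x"
proof -
  have "(THE g'. g' \<in> S \<and> a g' x = a g x) = g"
    using assms act_eq_imp_eq by (intro the_equality) auto
  then show ?thesis unfolding colouring_def by simp
qed

lemma cut_set_sets:
  assumes "p \<in> S"
  shows "cut_set p \<in> sets borel"
proof (cases "ord p = 0")
  case True
  then have "cut_set p = shell U\<^sub>0 (cut_level p) \<inter> (a p -` shell U\<^sub>0 (cut_level p - 1) \<inter> space borel)"
    unfolding cut_set_def by auto
  then show ?thesis
    using shell_sets[OF U\<^sub>0_sets] measurable_sets[OF act_measurable shell_sets[OF U\<^sub>0_sets]] assms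
    by simp
next
  case False
  then show ?thesis
    using orbit_least_sets[OF B_sets act_measurable[of "inv p"]] assms unfolding cut_set_def by simp
qed

lemma orbit_colour_measurable:
  assumes "p \<in> S"
  shows "orbit_colour p \<in> borel \<rightarrow>\<^sub>M count_space UNIV"
proof -
  have [measurable]: "cut_set p \<in> sets borel" using cut_set_sets[OF assms] .
  have [measurable]: "hit_time (cut_set p) (a (inv p)) \<in> borel \<rightarrow>\<^sub>M count_space UNIV"
    using hit_time_measurable[OF act_measurable[of "inv p"] cut_set_sets[OF assms]] assms by simp
  show ?thesis
  proof (cases "ord p = 0")
    case True
    show ?thesis unfolding orbit_colour_def if_P[OF True] cut_colour_def[abs_def]
      parity_colour_def[abs_def] by measurable
  next
    case False
    show ?thesis unfolding orbit_colour_def if_not_P[OF False] parity_colour_def[abs_def]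
      by measurable
  qed
qed

lemma edge_colour_measurable:
  assumes "g \<in> S"
  shows "edge_colour g \<in> borel \<rightarrow>\<^sub>M count_space UNIV"
proof -
  have [measurable]: "orbit_colour g \<in> borel \<rightarrow>\<^sub>M count_space UNIV"
    "orbit_colour (inv g) \<in> borel \<rightarrow>\<^sub>M count_space UNIV" "a g \<in> borel \<rightarrow>\<^sub>M borel"
    using assms orbit_colour_measurable by auto
  show ?thesis unfolding edge_colour_def[abs_def] by measurable
qed

lemma colour_class_sets:
  assumes "g \<in> S"
  shows "{(x, y). y = a g x \<and> edge_colour g x = k} \<in> sets (borel \<Otimes>\<^sub>M borel)"
proof -
  have [measurable]: "a g \<in> borel \<rightarrow>\<^sub>M borel" "edge_colour g \<in> borel \<rightarrow>\<^sub>M count_space UNIV"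
    using assms edge_colour_measurable by auto
  have "{z \<in> space (borel \<Otimes>\<^sub>M borel). snd z = a g (fst z)} \<in> sets (borel \<Otimes>\<^sub>M borel)"
    by measurable
  moreover have "{z \<in> space (borel \<Otimes>\<^sub>M borel). edge_colour g (fst z) = k} \<in> sets (borel \<Otimes>\<^sub>M borel)"
    by measurable
  ultimately have "{z \<in> space (borel \<Otimes>\<^sub>M borel). snd z = a g (fst z)}
      \<inter> {z \<in> space (borel \<Otimes>\<^sub>M borel). edge_colour g (fst z) = k} \<in> sets (borel \<Otimes>\<^sub>M borel)"
    by (rule sets.Int)
  moreover have "{(x, y). y = a g x \<and> edge_colour g x = k}
      = {z \<in> space (borel \<Otimes>\<^sub>M borel). snd z = a g (fst z)}
      \<inter> {z \<in> space (borel \<Otimes>\<^sub>M borel). edge_colour g (fst z) = k}"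
    by (auto simp: space_pair_measure)
  ultimately show ?thesis by simp
qed

lemma borel_edge_coloring_colouring: "borel_edge_coloring G {..card S} colouring"
  unfolding borel_edge_coloring_def
proof (intro conjI allI impI ballI)
  fix x y assume "G x y"
  then obtain g where g: "g \<in> S" "y = a g x" by (auto simp: schreier_graph_iff)
  then show "colouring x y \<in> {..card S}"
    using edge_colour_range[of g x] idx_less[of g] idx_less[of "inv g"] colouring_eq by auto
  have "colouring y x = edge_colour (inv g) (a g x)"
    using g colouring_eq[of "inv g" y] by simp
  then show "colouring x y = colouring y x" using g colouring_eq edge_colour_inv by simp
next
  fix x y z assume "G x y" "G x z" "y \<noteq> z"
  then obtain g d where "g \<in> S" "y = a g x" "d \<in> S" "z = a d x" by (auto simp: schreier_graph_iff)
  moreover have "g \<noteq> d" using calculation \<open>y \<noteq> z\<close> by blast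
  ultimately show "colouring x y \<noteq> colouring x z" using edge_colour_proper colouring_eq by simp
next
  fix k :: nat
  have "{(x, y). G x y \<and> colouring x y = k} = (\<Union>g\<in>S. {(x, y). y = a g x \<and> edge_colour g x = k})"
    by (auto simp: schreier_graph_iff colouring_eq)
  then show "{(x, y). G x y \<and> colouring x y = k} \<in> sets (borel \<Otimes>\<^sub>M borel)"
    using colour_class_sets finite_S by (simp add: sets.finite_UN)
qed

end


theorem theorem1:
  fixes \<Gamma> :: "('g, 'b) monoid_scheme" and S :: "'g set"
    and a :: "'g \<Rightarrow> 'x::polish_space \<Rightarrow> 'x"
  assumes "marked_group \<Gamma> S"
    and "borel_action \<Gamma> a"
    and "free_action \<Gamma> a"
    and "asi_B (schreier_graph a S) = 1"
    and "\<forall>\<gamma>\<in>S. \<not> (group.ord \<Gamma> \<gamma> \<noteq> 0 \<and> odd (group.ord \<Gamma> \<gamma>))"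
  shows "\<exists>c :: 'x \<Rightarrow> 'x \<Rightarrow> nat. borel_edge_coloring (schreier_graph a S) {..card S} c"
proof -
  interpret marked_free_borel_action \<Gamma> S a
    using assms(1-3) by unfold_locales
  have "asi_B G \<le> 1" using assms(4) by simp
  then obtain U\<^sub>0 U\<^sub>1 where U: "U\<^sub>0 \<in> sets borel" "U\<^sub>0 \<union> U\<^sub>1 = UNIV"
    "finite_components (induced_graph (graph_power_le G (4 * card S + 1)) U\<^sub>0) U\<^sub>0"
    "finite_components (induced_graph (graph_power_le G (4 * card S + 1)) U\<^sub>1) U\<^sub>1"
    by (rule asi_B_le_one_cover) auto
  obtain B :: "nat \<Rightarrow> 'x set" where B: "\<And>n. open (B n)" "\<And>x y. x \<noteq> y \<Longrightarrow> \<exists>n. x \<in> B n \<and> y \<notin> B n"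
    using ex_separating_open_sequence by blast
  obtain idx where "bij_betw idx S {0..<card S}"
    using ex_bij_betw_finite_nat[OF finite_S] by blast
  then have idx: "inj_on idx S" "\<And>s. s \<in> S \<Longrightarrow> idx s < card S"
    unfolding bij_betw_def by auto
  interpret asi_one_colouring \<Gamma> S a U\<^sub>0 U\<^sub>1 "4 * card S + 1" B idx
  proof unfold_locales
    show "B n \<in> sets borel" for n using B(1) by simp
    show "s \<in> S \<Longrightarrow> ord s \<noteq> 0 \<Longrightarrow> even (ord s)" for s using assms(5) by blast
  qed (use U B(2) idx in simp_all)
  show ?thesis using borel_edge_coloring_colouring by blast
qed

end
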